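(* Let $R$ be a simplicial ring. For $M_+$ a finitely generated projective simplicial $R[t]$-module, multiplication by $t^i$ ($i\geq0$) induces an equivalence $M_+[p]\simeq M_+[p+i]$ for each $p\geq 0$. Likewise, for $M_-$ a finitely generated projective simplicial $R[t^{-1}]$-module, multiplication by $t^{-i}$ induces an equivalence $M_-[p]\simeq M_-[p-i]$ for each $p\leq 0$.
   Context: $R$ is an associative unital simplicial ring. For an $R[t]$-module $M_+$ and $p\geq0$, $M_+[p]:=t^pM_+/t^{p+1}M_+$. For an $R[t^{-1}]$-module $M_-$ and $p\leq0$, $M_-[p]:=t^{p}M_-/t^{p-1}M_-$. These are regarded as $R$-modules. *)

theory Defs
  imports "HOL-Algebra.UnivPoly" "HOL-Algebra.AbelCoset"
begin

definition simplicial_ops ::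
  "(nat \<Rightarrow> 'a set) \<Rightarrow> (nat \<Rightarrow> nat \<Rightarrow> 'a \<Rightarrow> 'a) \<Rightarrow> (nat \<Rightarrow> nat \<Rightarrow> 'a \<Rightarrow> 'a) \<Rightarrow> bool" where
  "simplicial_ops X d s \<longleftrightarrow>
     (\<forall>n i x. i \<le> Suc n \<and> x \<in> X (Suc n) \<longrightarrow> d n i x \<in> X n) \<and>
     (\<forall>n i x. i \<le> n \<and> x \<in> X n \<longrightarrow> s n i x \<in> X (Suc n)) \<and>
     \<comment> \<open>d_i d_j = d_{j-1} d_i for i < j\<close>
     (\<forall>n i j x. i < j \<and> j \<le> Suc (Suc n) \<and> x \<in> X (Suc (Suc n)) \<longrightarrow>
        d n i (d (Suc n) j x) = d n (j - 1) (d (Suc n) i x)) \<and>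
     \<comment> \<open>d_i s_j = s_{j-1} d_i for i < j\<close>
     (\<forall>n i j x. i < j \<and> j \<le> Suc n \<and> x \<in> X (Suc n) \<longrightarrow>
        d (Suc n) i (s (Suc n) j x) = s n (j - 1) (d n i x)) \<and>
     \<comment> \<open>d_j s_j = id = d_{j+1} s_j\<close>
     (\<forall>n j x. j \<le> n \<and> x \<in> X n \<longrightarrow> d n j (s n j x) = x \<and> d n (Suc j) (s n j x) = x) \<and>
     \<comment> \<open>d_i s_j = s_j d_{i-1} for i > j+1\<close>
     (\<forall>n i j x. Suc j < i \<and> i \<le> Suc (Suc n) \<and> x \<in> X (Suc n) \<longrightarrow>
        d (Suc n) i (s (Suc n) j x) = s n j (d n (i - 1) x)) \<and>
     \<comment> \<open>s_i s_j = s_{j+1} s_i for i \<le> j\<close>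
     (\<forall>n i j x. i \<le> j \<and> j \<le> n \<and> x \<in> X n \<longrightarrow>
        s (Suc n) i (s n j x) = s (Suc n) (Suc j) (s n i x))"

definition simplicial_ring ::
  "(nat \<Rightarrow> ('r, 'x) ring_scheme) \<Rightarrow> (nat \<Rightarrow> nat \<Rightarrow> 'r \<Rightarrow> 'r) \<Rightarrow> (nat \<Rightarrow> nat \<Rightarrow> 'r \<Rightarrow> 'r) \<Rightarrow> bool" where
  "simplicial_ring R d s \<longleftrightarrow>
     (\<forall>n. ring (R n)) \<and> simplicial_ops (\<lambda>n. carrier (R n)) d s \<and>
     (\<forall>n i. i \<le> Suc n \<longrightarrow> d n i \<in> ring_hom (R (Suc n)) (R n)) \<and>
     (\<forall>n i. i \<le> n \<longrightarrow> s n i \<in> ring_hom (R n) (R (Suc n)))"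

definition left_module :: "('s, 'x) ring_scheme \<Rightarrow> ('s, 'm, 'y) module_scheme \<Rightarrow> bool" where
  "left_module A M \<longleftrightarrow> ring A \<and> abelian_group M \<and>
     (\<forall>a \<in> carrier A. \<forall>x \<in> carrier M. smult M a x \<in> carrier M) \<and>
     (\<forall>a \<in> carrier A. \<forall>b \<in> carrier A. \<forall>x \<in> carrier M.
        smult M (a \<oplus>\<^bsub>A\<^esub> b) x = smult M a x \<oplus>\<^bsub>M\<^esub> smult M b x) \<and>
     (\<forall>a \<in> carrier A. \<forall>x \<in> carrier M. \<forall>y \<in> carrier M.
        smult M a (x \<oplus>\<^bsub>M\<^esub> y) = smult M a x \<oplus>\<^bsub>M\<^esub> smult M a y) \<and>
     (\<forall>a \<in> carrier A. \<forall>b \<in> carrier A. \<forall>x \<in> carrier M.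
        smult M (a \<otimes>\<^bsub>A\<^esub> b) x = smult M a (smult M b x)) \<and>
     (\<forall>x \<in> carrier M. smult M \<one>\<^bsub>A\<^esub> x = x)"

definition simplicial_module ::
  "(nat \<Rightarrow> ('s, 'x) ring_scheme) \<Rightarrow> (nat \<Rightarrow> nat \<Rightarrow> 's \<Rightarrow> 's) \<Rightarrow> (nat \<Rightarrow> nat \<Rightarrow> 's \<Rightarrow> 's) \<Rightarrow>
   (nat \<Rightarrow> ('s, 'm) module) \<Rightarrow> (nat \<Rightarrow> nat \<Rightarrow> 'm \<Rightarrow> 'm) \<Rightarrow> (nat \<Rightarrow> nat \<Rightarrow> 'm \<Rightarrow> 'm) \<Rightarrow> bool" where
  "simplicial_module A dA sA M d s \<longleftrightarrow>
     (\<forall>n. left_module (A n) (M n)) \<and> simplicial_ops (\<lambda>n. carrier (M n)) d s \<and>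
     (\<forall>n i. i \<le> Suc n \<longrightarrow>
        (\<forall>x \<in> carrier (M (Suc n)). \<forall>y \<in> carrier (M (Suc n)).
           d n i (x \<oplus>\<^bsub>M (Suc n)\<^esub> y) = d n i x \<oplus>\<^bsub>M n\<^esub> d n i y) \<and>
        (\<forall>a \<in> carrier (A (Suc n)). \<forall>x \<in> carrier (M (Suc n)).
           d n i (smult (M (Suc n)) a x) = smult (M n) (dA n i a) (d n i x))) \<and>
     (\<forall>n i. i \<le> n \<longrightarrow>
        (\<forall>x \<in> carrier (M n). \<forall>y \<in> carrier (M n).
           s n i (x \<oplus>\<^bsub>M n\<^esub> y) = s n i x \<oplus>\<^bsub>M (Suc n)\<^esub> s n i y) \<and>
        (\<forall>a \<in> carrier (A n). \<forall>x \<in> carrier (M n).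
           s n i (smult (M n) a x) = smult (M (Suc n)) (sA n i a) (s n i x)))"

definition pmap :: "('a \<Rightarrow> 'b) \<Rightarrow> (nat \<Rightarrow> 'a) \<Rightarrow> (nat \<Rightarrow> 'b)" where
  "pmap f p = (\<lambda>k. f (p k))"

definition simplicial_poly_module ::
  "(nat \<Rightarrow> ('r, 'x) ring_scheme) \<Rightarrow> (nat \<Rightarrow> nat \<Rightarrow> 'r \<Rightarrow> 'r) \<Rightarrow> (nat \<Rightarrow> nat \<Rightarrow> 'r \<Rightarrow> 'r) \<Rightarrow>
   (nat \<Rightarrow> (nat \<Rightarrow> 'r, 'm) module) \<Rightarrow> (nat \<Rightarrow> nat \<Rightarrow> 'm \<Rightarrow> 'm) \<Rightarrow> (nat \<Rightarrow> nat \<Rightarrow> 'm \<Rightarrow> 'm) \<Rightarrow> bool" where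
  "simplicial_poly_module R dR sR M d s \<longleftrightarrow>
     simplicial_module (\<lambda>n. UP (R n)) (\<lambda>n i. pmap (dR n i)) (\<lambda>n i. pmap (sR n i)) M d s"

text \<open>Finitely generated projective module: a retract of a finite free module A^k.
  A linear map A^k \<rightarrow> M is (a_j)_j \<mapsto> \<Sum>_j a_j m_j for generators m_j; a linear map
  M \<rightarrow> A^k is a k-tuple of A-linear forms \<sigma>_j; the retraction condition says the
  composite M \<rightarrow> A^k \<rightarrow> M is the identity.\<close>

definition fg_projective :: "('s, 'x) ring_scheme \<Rightarrow> ('s, 'm) module \<Rightarrow> bool" where
  "fg_projective A M \<longleftrightarrow> left_module A M \<and>
     (\<exists>(k::nat) (m :: nat \<Rightarrow> 'm) (\<sigma> :: nat \<Rightarrow> 'm \<Rightarrow> 's).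
        (\<forall>j<k. m j \<in> carrier M) \<and>
        (\<forall>j<k. \<forall>x \<in> carrier M. \<sigma> j x \<in> carrier A) \<and>
        (\<forall>j<k. \<forall>x \<in> carrier M. \<forall>y \<in> carrier M. \<sigma> j (x \<oplus>\<^bsub>M\<^esub> y) = \<sigma> j x \<oplus>\<^bsub>A\<^esub> \<sigma> j y) \<and>
        (\<forall>j<k. \<forall>a \<in> carrier A. \<forall>x \<in> carrier M. \<sigma> j (smult M a x) = a \<otimes>\<^bsub>A\<^esub> \<sigma> j x) \<and>
        (\<forall>x \<in> carrier M. finsum M (\<lambda>j. smult M (\<sigma> j x) (m j)) {..<k} = x))"

text \<open>Normalized (Moore) complex: N_0 = G_0, N_{n+1} = \<Inter>_{1\<le>i\<le>n+1} ker d_i,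
  differential d_0. \<pi>_n = Z_n / B_n.\<close>

definition moore_N :: "(nat \<Rightarrow> ('g, 'x) monoid_scheme) \<Rightarrow> (nat \<Rightarrow> nat \<Rightarrow> 'g \<Rightarrow> 'g) \<Rightarrow> nat \<Rightarrow> 'g set" where
  "moore_N G d n = (case n of 0 \<Rightarrow> carrier (G 0)
     | Suc m \<Rightarrow> {x \<in> carrier (G (Suc m)). \<forall>i. 1 \<le> i \<and> i \<le> Suc m \<longrightarrow> d m i x = \<one>\<^bsub>G m\<^esub>})"

definition moore_Z :: "(nat \<Rightarrow> ('g, 'x) monoid_scheme) \<Rightarrow> (nat \<Rightarrow> nat \<Rightarrow> 'g \<Rightarrow> 'g) \<Rightarrow> nat \<Rightarrow> 'g set" where
  "moore_Z G d n = (case n of 0 \<Rightarrow> moore_N G d 0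
     | Suc m \<Rightarrow> {x \<in> moore_N G d (Suc m). d m 0 x = \<one>\<^bsub>G m\<^esub>})"

definition moore_B :: "(nat \<Rightarrow> ('g, 'x) monoid_scheme) \<Rightarrow> (nat \<Rightarrow> nat \<Rightarrow> 'g \<Rightarrow> 'g) \<Rightarrow> nat \<Rightarrow> 'g set" where
  "moore_B G d n = d n 0 ` moore_N G d (Suc n)"

text \<open>A simplicial homomorphism f : G \<rightarrow> H (levelwise group homomorphisms commuting with
  faces and degeneracies) is a weak equivalence if it induces bijections
  \<pi>_n G \<rightarrow> \<pi>_n H for all n.\<close>

definition weak_equivalence ::
  "(nat \<Rightarrow> ('g, 'x) monoid_scheme) \<Rightarrow> (nat \<Rightarrow> nat \<Rightarrow> 'g \<Rightarrow> 'g) \<Rightarrow> (nat \<Rightarrow> nat \<Rightarrow> 'g \<Rightarrow> 'g) \<Rightarrow>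
   (nat \<Rightarrow> ('h, 'y) monoid_scheme) \<Rightarrow> (nat \<Rightarrow> nat \<Rightarrow> 'h \<Rightarrow> 'h) \<Rightarrow> (nat \<Rightarrow> nat \<Rightarrow> 'h \<Rightarrow> 'h) \<Rightarrow>
   (nat \<Rightarrow> 'g \<Rightarrow> 'h) \<Rightarrow> bool" where
  "weak_equivalence G dG sG H dH sH f \<longleftrightarrow>
     (\<forall>n. f n \<in> hom (G n) (H n)) \<and>
     (\<forall>n i x. i \<le> Suc n \<and> x \<in> carrier (G (Suc n)) \<longrightarrow> f n (dG n i x) = dH n i (f (Suc n) x)) \<and>
     (\<forall>n i x. i \<le> n \<and> x \<in> carrier (G n) \<longrightarrow> f (Suc n) (sG n i x) = sH n i (f n x)) \<and>
     (\<forall>n. \<forall>z \<in> moore_Z H dH n. \<exists>w \<in> moore_Z G dG n. \<exists>b \<in> moore_B H dH n.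
          z = f n w \<otimes>\<^bsub>H n\<^esub> b) \<and>
     (\<forall>n. \<forall>w \<in> moore_Z G dG n. f n w \<in> moore_B H dH n \<longrightarrow> w \<in> moore_B G dG n)"


definition tpow_sub :: "('r, 'x) ring_scheme \<Rightarrow> (nat \<Rightarrow> 'r, 'm) module \<Rightarrow> nat \<Rightarrow> 'm set" where
  "tpow_sub R M p = {smult M (monom (UP R) \<one>\<^bsub>R\<^esub> p) x | x. x \<in> carrier M}"

text \<open>Levels of t^p M / t^{p+1} M, as the factor group of the additive group of
  t^p M_n by t^{p+1} M_n.\<close>

definition grade_level ::
  "(nat \<Rightarrow> ('r, 'x) ring_scheme) \<Rightarrow> (nat \<Rightarrow> (nat \<Rightarrow> 'r, 'm) module) \<Rightarrow> nat \<Rightarrow> nat \<Rightarrow> 'm set monoid" where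
  "grade_level R M p n =
     FactGroup ((add_monoid (M n))\<lparr>carrier := tpow_sub (R n) (M n) p\<rparr>) (tpow_sub (R n) (M n) (Suc p))"

text \<open>Induced structure maps on cosets (via any representative).\<close>

definition grade_face ::
  "(nat \<Rightarrow> ('r, 'x) ring_scheme) \<Rightarrow> (nat \<Rightarrow> (nat \<Rightarrow> 'r, 'm) module) \<Rightarrow> (nat \<Rightarrow> nat \<Rightarrow> 'm \<Rightarrow> 'm) \<Rightarrow>
   nat \<Rightarrow> nat \<Rightarrow> nat \<Rightarrow> 'm set \<Rightarrow> 'm set" where
  "grade_face R M d p n i C = tpow_sub (R n) (M n) (Suc p) +>\<^bsub>M n\<^esub> d n i (SOME x. x \<in> C)"

definition grade_degen ::
  "(nat \<Rightarrow> ('r, 'x) ring_scheme) \<Rightarrow> (nat \<Rightarrow> (nat \<Rightarrow> 'r, 'm) module) \<Rightarrow> (nat \<Rightarrow> nat \<Rightarrow> 'm \<Rightarrow> 'm) \<Rightarrow>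
   nat \<Rightarrow> nat \<Rightarrow> nat \<Rightarrow> 'm set \<Rightarrow> 'm set" where
  "grade_degen R M s p n i C = tpow_sub (R (Suc n)) (M (Suc n)) (Suc p) +>\<^bsub>M (Suc n)\<^esub> s n i (SOME x. x \<in> C)"

definition grade_mult ::
  "(nat \<Rightarrow> ('r, 'x) ring_scheme) \<Rightarrow> (nat \<Rightarrow> (nat \<Rightarrow> 'r, 'm) module) \<Rightarrow> nat \<Rightarrow> nat \<Rightarrow> nat \<Rightarrow> 'm set \<Rightarrow> 'm set" where
  "grade_mult R M p i n C = tpow_sub (R n) (M n) (Suc (p + i)) +>\<^bsub>M n\<^esub>
       smult (M n) (monom (UP (R n)) \<one>\<^bsub>R n\<^esub> i) (SOME x. x \<in> C)"

definition mult_equiv_pos ::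
  "(nat \<Rightarrow> ('r, 'x) ring_scheme) \<Rightarrow> (nat \<Rightarrow> (nat \<Rightarrow> 'r, 'm) module) \<Rightarrow>
   (nat \<Rightarrow> nat \<Rightarrow> 'm \<Rightarrow> 'm) \<Rightarrow> (nat \<Rightarrow> nat \<Rightarrow> 'm \<Rightarrow> 'm) \<Rightarrow> nat \<Rightarrow> nat \<Rightarrow> bool" where
  "mult_equiv_pos R M d s p i \<longleftrightarrow>
     weak_equivalence
       (grade_level R M p) (grade_face R M d p) (grade_degen R M s p)
       (grade_level R M (p + i)) (grade_face R M d (p + i)) (grade_degen R M s (p + i))
       (grade_mult R M p i)"

text \<open>For an R[t^{-1}]-module M_- (polynomial variable u = t^{-1}) and p \<le> 0,
  M_-[p] = t^p M_- / t^{p-1} M_- = u^{-p} M_- / u^{-p+1} M_-; multiplication by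
  t^{-i} = u^i maps M_-[p] to M_-[p-i].\<close>

definition grade_level_neg ::
  "(nat \<Rightarrow> ('r, 'x) ring_scheme) \<Rightarrow> (nat \<Rightarrow> (nat \<Rightarrow> 'r, 'm) module) \<Rightarrow> int \<Rightarrow> nat \<Rightarrow> 'm set monoid" where
  "grade_level_neg R M p = grade_level R M (nat (- p))"

definition mult_equiv_neg ::
  "(nat \<Rightarrow> ('r, 'x) ring_scheme) \<Rightarrow> (nat \<Rightarrow> (nat \<Rightarrow> 'r, 'm) module) \<Rightarrow>
   (nat \<Rightarrow> nat \<Rightarrow> 'm \<Rightarrow> 'm) \<Rightarrow> (nat \<Rightarrow> nat \<Rightarrow> 'm \<Rightarrow> 'm) \<Rightarrow> int \<Rightarrow> nat \<Rightarrow> bool" where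
  "mult_equiv_neg R M d s p i \<longleftrightarrow>
     weak_equivalence
       (grade_level_neg R M p) (grade_face R M d (nat (- p))) (grade_degen R M s (nat (- p)))
       (grade_level_neg R M (p - int i)) (grade_face R M d (nat (- (p - int i))))
         (grade_degen R M s (nat (- (p - int i))))
       (grade_mult R M (nat (- p)) i)"

end

theory Submission
  imports Defs
begin

text \<open>Multiplication by \<open>t^i\<close> maps \<open>t^p M\<close> onto \<open>t^(p+i) M\<close> and \<open>t^(p+1) M\<close> onto
  \<open>t^(p+i+1) M\<close>, and it is injective on \<open>M\<close>: \<open>M\<close> is a retract of a free \<open>R[t]\<close>-module,
  on which \<open>t\<close> is a non-zero-divisor. Hence it induces an isomorphism \<open>M[p] \<cong> M[p+i]\<close> in
  every simplicial degree, compatible with faces and degeneracies, i.e. an isomorphism of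
  simplicial groups, which is in particular a weak equivalence. For \<open>M\<^sub>-\<close> the same
  argument applies to the polynomial variable \<open>t\<^sup>-\<^sup>1\<close>.\<close>

lemma weak_equivalence_if_levelwise_bij:
  fixes G :: "nat \<Rightarrow> ('g, 'x) monoid_scheme" and H :: "nat \<Rightarrow> ('h, 'y) monoid_scheme"
  assumes group_G: "\<And>n. group (G n)" and group_H: "\<And>n. group (H n)"
    and hom: "\<And>n. f n \<in> hom (G n) (H n)"
    and bij: "\<And>n. bij_betw (f n) (carrier (G n)) (carrier (H n))"
    and face_closed: "\<And>n i x. i \<le> Suc n \<Longrightarrow> x \<in> carrier (G (Suc n)) \<Longrightarrow> dG n i x \<in> carrier (G n)"
    and face_one: "\<And>n i. i \<le> Suc n \<Longrightarrow> dH n i \<one>\<^bsub>H (Suc n)\<^esub> = \<one>\<^bsub>H n\<^esub>"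
    and face_comm: "\<And>n i x. i \<le> Suc n \<Longrightarrow> x \<in> carrier (G (Suc n)) \<Longrightarrow>
      f n (dG n i x) = dH n i (f (Suc n) x)"
    and degen_comm: "\<And>n i x. i \<le> n \<Longrightarrow> x \<in> carrier (G n) \<Longrightarrow>
      f (Suc n) (sG n i x) = sH n i (f n x)"
  shows "weak_equivalence G dG sG H dH sH f"
proof -
  have f_one: "f n \<one>\<^bsub>G n\<^esub> = \<one>\<^bsub>H n\<^esub>" for n
    using group_hom.hom_one[OF group_hom.intro[OF group_G group_H group_hom_axioms.intro[OF hom]]] .
  have inj: "x = y" if "x \<in> carrier (G n)" "y \<in> carrier (G n)" "f n x = f n y" for n x y
    using bij that by (meson bij_betw_def inj_onD)
  have surj: "\<exists>w\<in>carrier (G n). z = f n w" if "z \<in> carrier (H n)" for n z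
    using bij that by (metis bij_betw_def imageE)
  have face_kernel: "dG m i w = \<one>\<^bsub>G m\<^esub>"
    if "i \<le> Suc m" "w \<in> carrier (G (Suc m))" "dH m i (f (Suc m) w) = \<one>\<^bsub>H m\<^esub>" for m i w
    using that inj face_closed face_comm f_one group.is_monoid[OF group_G] monoid.one_closed by metis
  have one_boundary: "\<one>\<^bsub>H n\<^esub> \<in> moore_B H dH n" for n
    unfolding moore_B_def
    by (rule image_eqI[where x="\<one>\<^bsub>H (Suc n)\<^esub>"])
       (auto simp: face_one moore_N_def group.is_monoid[OF group_H] monoid.one_closed)
  have cycles: "\<exists>w \<in> moore_Z G dG n. \<exists>b \<in> moore_B H dH n. z = f n w \<otimes>\<^bsub>H n\<^esub> b"
    if z: "z \<in> moore_Z H dH n" for n z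
  proof -
    have "z \<in> carrier (H n)" using z by (cases n) (auto simp: moore_Z_def moore_N_def)
    then obtain w where w: "w \<in> carrier (G n)" "z = f n w" using surj by blast
    have "w \<in> moore_Z G dG n"
      using w z face_kernel by (cases n) (auto simp: moore_Z_def moore_N_def)
    moreover have "z = f n w \<otimes>\<^bsub>H n\<^esub> \<one>\<^bsub>H n\<^esub>"
      using w \<open>z \<in> carrier (H n)\<close> group.is_monoid[OF group_H] monoid.r_one by metis
    ultimately show ?thesis using one_boundary by blast
  qed
  have boundaries: "w \<in> moore_B G dG n"
    if w: "w \<in> moore_Z G dG n" and fw: "f n w \<in> moore_B H dH n" for n w
  proof -
    have "w \<in> carrier (G n)" using w by (cases n) (auto simp: moore_Z_def moore_N_def)
    obtain y where y: "y \<in> moore_N H dH (Suc n)" "f n w = dH n 0 y"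
      using fw by (auto simp: moore_B_def)
    then obtain y' where y': "y' \<in> carrier (G (Suc n))" "y = f (Suc n) y'"
      using surj by (fastforce simp: moore_N_def)
    have "y' \<in> moore_N G dG (Suc n)" using y y' face_kernel by (auto simp: moore_N_def)
    moreover have "dG n 0 y' = w"
      using inj[OF face_closed[of 0 n y'] \<open>w \<in> carrier (G n)\<close>] y y' face_comm by simp
    ultimately show ?thesis by (auto simp: moore_B_def)
  qed
  show ?thesis
    unfolding weak_equivalence_def using hom face_comm degen_comm cycles boundaries by blast
qed

lemma (in abelian_subgroup) a_rcos_eq_imp_repr:
  assumes "u \<in> carrier G" "H +> u = H +> v"
  shows "\<exists>h\<in>H. u = h \<oplus> v"
  using a_rcos_self[OF assms(1)] assms(2) by (auto simp: a_r_coset_def')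

lemma (in abelian_subgroup) a_rcos_add_member:
  assumes "v \<in> carrier G" "h \<in> H"
  shows "H +> (h \<oplus> v) = H +> v"
  using a_repr_independence'[OF a_rcosI[OF assms(2) a_subset assms(1)] assms(1)] by simp

lemma a_rcos_map_some_repr:
  assumes N: "abelian_subgroup N M" and N': "abelian_subgroup N' M'"
    and closed: "\<And>x. x \<in> carrier M \<Longrightarrow> \<phi> x \<in> carrier M'"
    and additive: "\<And>x y. x \<in> carrier M \<Longrightarrow> y \<in> carrier M \<Longrightarrow> \<phi> (x \<oplus>\<^bsub>M\<^esub> y) = \<phi> x \<oplus>\<^bsub>M'\<^esub> \<phi> y"
    and maps_to: "\<phi> ` N \<subseteq> N'"
    and x: "x \<in> carrier M"
  shows "N' +>\<^bsub>M'\<^esub> \<phi> (SOME y. y \<in> N +>\<^bsub>M\<^esub> x) = N' +>\<^bsub>M'\<^esub> \<phi> x"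
proof -
  have "(SOME y. y \<in> N +>\<^bsub>M\<^esub> x) \<in> N +>\<^bsub>M\<^esub> x"
    by (rule someI, rule abelian_subgroup.a_rcos_self[OF N x])
  then obtain h where h: "h \<in> N" "(SOME y. y \<in> N +>\<^bsub>M\<^esub> x) = h \<oplus>\<^bsub>M\<^esub> x"
    by (auto simp: a_r_coset_def')
  moreover have "h \<in> carrier M"
    using h(1) additive_subgroup.a_subset[OF abelian_subgroup.axioms(1)[OF N]] by blast
  ultimately show ?thesis
    using abelian_subgroup.a_rcos_add_member[OF N' closed[OF x]] maps_to additive x by auto
qed

lemma carrier_FactGroup_add_restrict:
  "carrier (FactGroup ((add_monoid M)\<lparr>carrier := S\<rparr>) N) = (\<lambda>a. N +>\<^bsub>M\<^esub> a) ` S"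
  by (auto simp: FactGroup_def RCOSETS_def r_coset_def a_r_coset_def)

lemma mult_FactGroup_add_restrict:
  "C \<otimes>\<^bsub>FactGroup ((add_monoid M)\<lparr>carrier := S\<rparr>) N\<^esub> D = C <+>\<^bsub>M\<^esub> D"
  by (simp add: FactGroup_def set_mult_def set_add_def)

lemma one_FactGroup_add_restrict:
  "\<one>\<^bsub>FactGroup ((add_monoid M)\<lparr>carrier := S\<rparr>) N\<^esub> = N"
  by (simp add: FactGroup_def)

lemma group_FactGroup_add_restrict:
  assumes "abelian_group M" "subgroup S (add_monoid M)" "subgroup N (add_monoid M)" "N \<subseteq> S"
  shows "group (FactGroup ((add_monoid M)\<lparr>carrier := S\<rparr>) N)"
proof -
  interpret comm_group "add_monoid M" using abelian_group.a_comm_group[OF assms(1)] .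
  show ?thesis
    using normal.factorgroup_is_group normal_restrict_supergroup subgroup_imp_normal assms(2-4)
    by blast
qed

lemma (in UP_ring) monom_one_mult_cancel:
  assumes "p \<in> carrier P" "q \<in> carrier P" "monom P \<one> i \<otimes>\<^bsub>P\<^esub> p = monom P \<one> i \<otimes>\<^bsub>P\<^esub> q"
  shows "p = q"
proof (rule up_eqI)
  fix m
  have "coeff P p m = coeff P (monom P \<one> i \<otimes>\<^bsub>P\<^esub> p) (m + i)"
    using coeff_monom_mult[of \<one> p i m] assms(1) by (simp add: coeff_closed)
  also have "\<dots> = coeff P q m"
    using coeff_monom_mult[of \<one> q i m] assms(2,3) by (simp add: coeff_closed)
  finally show "coeff P p m = coeff P q m" .
qed (use assms in auto)

locale up_module =
  fixes R :: "('r, 'x) ring_scheme" and M :: "(nat \<Rightarrow> 'r, 'm) module"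
  assumes ring: "ring R" and left_module: "left_module (UP R) M"
begin

abbreviation tpow :: "nat \<Rightarrow> nat \<Rightarrow> 'r" where "tpow k \<equiv> monom (UP R) \<one>\<^bsub>R\<^esub> k"

lemma is_UP_ring: "UP_ring R"
  using ring by (simp add: UP_ring_def)

lemma abelian_group: "abelian_group M"
  using left_module by (simp add: left_module_def)

lemma zero_closed: "\<zero>\<^bsub>M\<^esub> \<in> carrier M"
  using abelian_monoid.zero_closed[OF abelian_group.axioms(1)[OF abelian_group]] .

lemma tpow_closed: "tpow k \<in> carrier (UP R)"
  using UP_ring.monom_closed[OF is_UP_ring] ring.ring_simprules(6)[OF ring] by blast

lemma smult_closed: "a \<in> carrier (UP R) \<Longrightarrow> x \<in> carrier M \<Longrightarrow> smult M a x \<in> carrier M"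
  using left_module by (simp add: left_module_def)

lemma smult_add:
  "a \<in> carrier (UP R) \<Longrightarrow> x \<in> carrier M \<Longrightarrow> y \<in> carrier M \<Longrightarrow>
   smult M a (x \<oplus>\<^bsub>M\<^esub> y) = smult M a x \<oplus>\<^bsub>M\<^esub> smult M a y"
  using left_module by (simp add: left_module_def)

lemma smult_tpow_tpow:
  assumes "x \<in> carrier M"
  shows "smult M (tpow a) (smult M (tpow b) x) = smult M (tpow (a + b)) x"
proof -
  have "tpow a \<otimes>\<^bsub>UP R\<^esub> tpow b = tpow (a + b)"
    using UP_ring.monom_mult[OF is_UP_ring, of "\<one>\<^bsub>R\<^esub>" "\<one>\<^bsub>R\<^esub>" a b] ring.ring_simprules(6,12)[OF ring]
    by simp
  moreover have "smult M (tpow a \<otimes>\<^bsub>UP R\<^esub> tpow b) x = smult M (tpow a) (smult M (tpow b) x)"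
    using left_module tpow_closed assms by (simp add: left_module_def)
  ultimately show ?thesis by simp
qed

lemma smult_group_hom:
  assumes "a \<in> carrier (UP R)"
  shows "group_hom (add_monoid M) (add_monoid M) (smult M a)"
proof -
  have "group (add_monoid M)"
    using abelian_group.a_group[OF abelian_group] .
  moreover have "smult M a \<in> hom (add_monoid M) (add_monoid M)"
    using smult_closed smult_add assms by (auto intro: homI)
  ultimately show ?thesis by (simp add: group_hom_def group_hom_axioms_def)
qed

abbreviation T :: "nat \<Rightarrow> 'm set" where "T k \<equiv> tpow_sub R M k"

lemma tpow_sub_eq_image: "T k = smult M (tpow k) ` carrier M"
  by (auto simp: tpow_sub_def)

lemma tpow_sub_subgroup: "subgroup (T k) (add_monoid M)"
  using group_hom.img_is_subgroup[OF smult_group_hom[OF tpow_closed]]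
  by (simp add: tpow_sub_eq_image)

lemma tpow_sub_closed: "x \<in> T k \<Longrightarrow> x \<in> carrier M"
  using subgroup.subset[OF tpow_sub_subgroup] by auto

lemma zero_coset: "T k +>\<^bsub>M\<^esub> \<zero>\<^bsub>M\<^esub> = T k"
  using abelian_group.a_coset_join2[OF abelian_group zero_closed tpow_sub_subgroup]
    subgroup.one_closed[OF tpow_sub_subgroup]
  by simp

lemma tpow_sub_abelian_subgroup: "abelian_subgroup (T k) M"
  by (rule abelian_subgroupI3[OF additive_subgroupI[OF tpow_sub_subgroup] abelian_group])

lemma tpow_sub_Suc_subset: "T (Suc k) \<subseteq> T k"
proof
  fix x assume "x \<in> T (Suc k)"
  then obtain y where y: "y \<in> carrier M" "x = smult M (tpow (k + 1)) y"
    by (auto simp: tpow_sub_def)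
  then have "x = smult M (tpow k) (smult M (tpow 1) y)"
    using smult_tpow_tpow by simp
  then show "x \<in> T k"
    using smult_closed[OF tpow_closed y(1)] by (auto simp: tpow_sub_def)
qed

lemma smult_tpow_image_tpow_sub: "smult M (tpow i) ` T k = T (k + i)"
  unfolding tpow_sub_eq_image image_image
  by (rule image_cong[OF refl]) (simp add: smult_tpow_tpow add.commute)

lemma smult_tpow_inj_on:
  assumes "fg_projective (UP R) M"
  shows "inj_on (smult M (tpow i)) (carrier M)"
proof (rule inj_onI)
  fix x y assume x: "x \<in> carrier M" and y: "y \<in> carrier M"
    and e: "smult M (tpow i) x = smult M (tpow i) y"
  obtain K :: nat and m \<sigma> where m: "\<forall>j<K. m j \<in> carrier M"
    and \<sigma>_closed: "\<forall>j<K. \<forall>x \<in> carrier M. \<sigma> j x \<in> carrier (UP R)"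
    and \<sigma>_linear: "\<forall>j<K. \<forall>a \<in> carrier (UP R). \<forall>x \<in> carrier M. \<sigma> j (smult M a x) = a \<otimes>\<^bsub>UP R\<^esub> \<sigma> j x"
    and retract: "\<forall>x \<in> carrier M. finsum M (\<lambda>j. smult M (\<sigma> j x) (m j)) {..<K} = x"
    using assms unfolding fg_projective_def by blast
  have "\<sigma> j x = \<sigma> j y" if j: "j < K" for j
  proof -
    have "tpow i \<otimes>\<^bsub>UP R\<^esub> \<sigma> j x = tpow i \<otimes>\<^bsub>UP R\<^esub> \<sigma> j y"
      using \<sigma>_linear j tpow_closed x y e by metis
    then show ?thesis
      using UP_ring.monom_one_mult_cancel[OF is_UP_ring] \<sigma>_closed j x y by blast
  qed
  then have "finsum M (\<lambda>j. smult M (\<sigma> j x) (m j)) {..<K} = finsum M (\<lambda>j. smult M (\<sigma> j y) (m j)) {..<K}"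
    by (intro abelian_monoid.finsum_cong'[OF abelian_group.axioms(1)[OF abelian_group]])
       (use \<sigma>_closed m y smult_closed in auto)
  then show "x = y" using retract x y by simp
qed

end

lemma pmap_ring_hom_tpow:
  assumes "h \<in> ring_hom A B" "ring A" "ring B"
  shows "pmap h (monom (UP A) \<one>\<^bsub>A\<^esub> k) = monom (UP B) \<one>\<^bsub>B\<^esub> k"
  using ring_hom_one[OF assms(1)] ring_hom_zero[OF assms] ring.ring_simprules(6)[OF assms(2)]
    ring.ring_simprules(6)[OF assms(3)]
  by (simp add: pmap_def UP_def fun_eq_iff)

locale simplicial_fgp_poly_module =
  fixes R :: "nat \<Rightarrow> ('r, 'x) ring_scheme" and dR sR :: "nat \<Rightarrow> nat \<Rightarrow> 'r \<Rightarrow> 'r"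
    and M :: "nat \<Rightarrow> (nat \<Rightarrow> 'r, 'm) module" and d s :: "nat \<Rightarrow> nat \<Rightarrow> 'm \<Rightarrow> 'm"
  assumes simplicial_ring: "simplicial_ring R dR sR"
    and simplicial_poly_module: "simplicial_poly_module R dR sR M d s"
    and fg_projective: "\<And>n. fg_projective (UP (R n)) (M n)"
begin

lemmas simplicial_module_unfolded =
  simplicial_poly_module[unfolded simplicial_poly_module_def simplicial_module_def]

sublocale level: up_module "R n" "M n" for n
  using simplicial_ring simplicial_module_unfolded
  by (simp add: up_module_def simplicial_ring_def)

lemma ring_hom_face: "i \<le> Suc n \<Longrightarrow> dR n i \<in> ring_hom (R (Suc n)) (R n)"
  and ring_hom_degen: "i \<le> n \<Longrightarrow> sR n i \<in> ring_hom (R n) (R (Suc n))"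
  using simplicial_ring by (simp_all add: simplicial_ring_def)

lemma face_closed: "i \<le> Suc n \<Longrightarrow> x \<in> carrier (M (Suc n)) \<Longrightarrow> d n i x \<in> carrier (M n)"
  and degen_closed: "i \<le> n \<Longrightarrow> x \<in> carrier (M n) \<Longrightarrow> s n i x \<in> carrier (M (Suc n))"
  using simplicial_module_unfolded by (simp_all add: simplicial_ops_def)

lemma face_add:
  "i \<le> Suc n \<Longrightarrow> x \<in> carrier (M (Suc n)) \<Longrightarrow> y \<in> carrier (M (Suc n)) \<Longrightarrow>
   d n i (x \<oplus>\<^bsub>M (Suc n)\<^esub> y) = d n i x \<oplus>\<^bsub>M n\<^esub> d n i y"
  and degen_add:
  "i \<le> n \<Longrightarrow> x \<in> carrier (M n) \<Longrightarrow> y \<in> carrier (M n) \<Longrightarrow>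
   s n i (x \<oplus>\<^bsub>M n\<^esub> y) = s n i x \<oplus>\<^bsub>M (Suc n)\<^esub> s n i y"
  using simplicial_module_unfolded by simp_all

lemma face_smult_tpow:
  assumes "i \<le> Suc n" "x \<in> carrier (M (Suc n))"
  shows "d n i (smult (M (Suc n)) (level.tpow (Suc n) k) x) = smult (M n) (level.tpow n k) (d n i x)"
  using simplicial_module_unfolded level.tpow_closed assms
    pmap_ring_hom_tpow[OF ring_hom_face[OF assms(1)] level.ring level.ring]
  by simp

lemma degen_smult_tpow:
  assumes "i \<le> n" "x \<in> carrier (M n)"
  shows "s n i (smult (M n) (level.tpow n k) x) = smult (M (Suc n)) (level.tpow (Suc n) k) (s n i x)"
  using simplicial_module_unfolded level.tpow_closed assms
    pmap_ring_hom_tpow[OF ring_hom_degen[OF assms(1)] level.ring level.ring]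
  by simp

lemma face_tpow_sub: "i \<le> Suc n \<Longrightarrow> d n i ` level.T (Suc n) k \<subseteq> level.T n k"
  by (auto simp: level.tpow_sub_eq_image face_smult_tpow face_closed)

lemma degen_tpow_sub: "i \<le> n \<Longrightarrow> s n i ` level.T n k \<subseteq> level.T (Suc n) k"
  by (auto simp: level.tpow_sub_eq_image degen_smult_tpow degen_closed)

lemma face_zero:
  assumes "i \<le> Suc n"
  shows "d n i \<zero>\<^bsub>M (Suc n)\<^esub> = \<zero>\<^bsub>M n\<^esub>"
proof -
  have "group_hom (add_monoid (M (Suc n))) (add_monoid (M n)) (d n i)"
    using abelian_group.a_group[OF level.abelian_group] face_closed[OF assms] face_add[OF assms]
    by (auto simp: group_hom_def group_hom_axioms_def intro: homI)
  then show ?thesis using group_hom.hom_one by fastforce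
qed

abbreviation grade_class :: "nat \<Rightarrow> nat \<Rightarrow> 'm \<Rightarrow> 'm set" where
  "grade_class q n a \<equiv> level.T n (Suc q) +>\<^bsub>M n\<^esub> a"

lemma carrier_grade_level:
  "carrier (grade_level R M q n) = grade_class q n ` level.T n q"
  unfolding grade_level_def by (rule carrier_FactGroup_add_restrict)

lemma mult_grade_level: "C \<otimes>\<^bsub>grade_level R M q n\<^esub> D = C <+>\<^bsub>M n\<^esub> D"
  unfolding grade_level_def by (rule mult_FactGroup_add_restrict)

lemma one_grade_level: "\<one>\<^bsub>grade_level R M q n\<^esub> = level.T n (Suc q)"
  unfolding grade_level_def by (rule one_FactGroup_add_restrict)

lemma group_grade_level: "group (grade_level R M q n)"
  unfolding grade_level_def
  by (rule group_FactGroup_add_restrict[OF level.abelian_group level.tpow_sub_subgroup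
        level.tpow_sub_subgroup level.tpow_sub_Suc_subset])

lemma grade_face_coset:
  "j \<le> Suc n \<Longrightarrow> a \<in> carrier (M (Suc n)) \<Longrightarrow>
   grade_face R M d q n j (grade_class q (Suc n) a) = grade_class q n (d n j a)"
  unfolding grade_face_def
  by (rule a_rcos_map_some_repr[OF level.tpow_sub_abelian_subgroup level.tpow_sub_abelian_subgroup])
     (simp_all add: face_closed face_add face_tpow_sub)

lemma grade_degen_coset:
  "j \<le> n \<Longrightarrow> a \<in> carrier (M n) \<Longrightarrow>
   grade_degen R M s q n j (grade_class q n a) = grade_class q (Suc n) (s n j a)"
  unfolding grade_degen_def
  by (rule a_rcos_map_some_repr[OF level.tpow_sub_abelian_subgroup level.tpow_sub_abelian_subgroup])
     (simp_all add: degen_closed degen_add degen_tpow_sub)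

lemma grade_mult_coset:
  "a \<in> carrier (M n) \<Longrightarrow>
   grade_mult R M p i n (grade_class p n a) = grade_class (p + i) n (smult (M n) (level.tpow n i) a)"
  unfolding grade_mult_def
  by (rule a_rcos_map_some_repr[OF level.tpow_sub_abelian_subgroup level.tpow_sub_abelian_subgroup])
     (use level.smult_tpow_image_tpow_sub[of n i "Suc p"] in
       \<open>simp_all add: level.smult_closed level.smult_add level.tpow_closed\<close>)

lemma grade_mult_hom: "grade_mult R M p i n \<in> hom (grade_level R M p n) (grade_level R M (p + i) n)"
proof (rule homI)
  fix C assume "C \<in> carrier (grade_level R M p n)"
  then obtain a where "a \<in> level.T n p" "C = grade_class p n a"
    by (auto simp: carrier_grade_level)
  then show "grade_mult R M p i n C \<in> carrier (grade_level R M (p + i) n)"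
    using level.smult_tpow_image_tpow_sub[of n i p] level.tpow_sub_closed
    by (auto simp: carrier_grade_level grade_mult_coset)
next
  fix C D assume "C \<in> carrier (grade_level R M p n)" "D \<in> carrier (grade_level R M p n)"
  then obtain a b where a: "a \<in> level.T n p" "C = grade_class p n a"
    and b: "b \<in> level.T n p" "D = grade_class p n b"
    by (auto simp: carrier_grade_level)
  then have ab: "a \<in> carrier (M n)" "b \<in> carrier (M n)"
    using level.tpow_sub_closed by auto
  note sum = abelian_subgroup.a_rcos_sum[OF level.tpow_sub_abelian_subgroup]
  show "grade_mult R M p i n (C \<otimes>\<^bsub>grade_level R M p n\<^esub> D) =
    grade_mult R M p i n C \<otimes>\<^bsub>grade_level R M (p + i) n\<^esub> grade_mult R M p i n D"
    using ab abelian_monoid.a_closed[OF abelian_group.axioms(1)[OF level.abelian_group]]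
    by (simp add: a b mult_grade_level sum grade_mult_coset level.smult_closed level.smult_add
        level.tpow_closed)
qed

lemma grade_mult_bij:
  "bij_betw (grade_mult R M p i n) (carrier (grade_level R M p n)) (carrier (grade_level R M (p + i) n))"
proof (rule bij_betw_imageI)
  let ?t = "smult (M n) (level.tpow n i)"
  have image_eq: "grade_mult R M p i n ` grade_class p n ` level.T n p = grade_class (p + i) n ` ?t ` level.T n p"
    unfolding image_image using level.tpow_sub_closed by (auto simp: grade_mult_coset)
  then show "grade_mult R M p i n ` carrier (grade_level R M p n) = carrier (grade_level R M (p + i) n)"
    by (simp add: carrier_grade_level level.smult_tpow_image_tpow_sub)
  show "inj_on (grade_mult R M p i n) (carrier (grade_level R M p n))"
  proof (rule inj_onI)
    fix C D assume "C \<in> carrier (grade_level R M p n)" "D \<in> carrier (grade_level R M p n)"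
      and eq: "grade_mult R M p i n C = grade_mult R M p i n D"
    then obtain a b where a: "a \<in> level.T n p" "C = grade_class p n a"
      and b: "b \<in> level.T n p" "D = grade_class p n b"
      by (auto simp: carrier_grade_level)
    have ab: "a \<in> carrier (M n)" "b \<in> carrier (M n)" using a b level.tpow_sub_closed by auto
    have "grade_class (p + i) n (?t a) = grade_class (p + i) n (?t b)"
      using eq by (simp add: a b ab grade_mult_coset)
    then obtain h where h: "h \<in> level.T n (Suc (p + i))" "?t a = h \<oplus>\<^bsub>M n\<^esub> ?t b"
      using abelian_subgroup.a_rcos_eq_imp_repr[OF level.tpow_sub_abelian_subgroup]
        level.smult_closed[OF level.tpow_closed ab(1)] by blast
    moreover have "level.T n (Suc (p + i)) = ?t ` level.T n (Suc p)"
      using level.smult_tpow_image_tpow_sub[of n i "Suc p"] by simp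
    ultimately obtain y where y: "y \<in> level.T n (Suc p)" "h = ?t y"
      by blast
    have y_closed: "y \<in> carrier (M n)" using y(1) level.tpow_sub_closed by blast
    have "?t a = ?t (y \<oplus>\<^bsub>M n\<^esub> b)"
      using h y y_closed ab by (simp add: level.smult_add level.tpow_closed)
    moreover have "y \<oplus>\<^bsub>M n\<^esub> b \<in> carrier (M n)"
      using abelian_monoid.a_closed[OF abelian_group.axioms(1)[OF level.abelian_group] y_closed ab(2)] .
    ultimately have "a = y \<oplus>\<^bsub>M n\<^esub> b"
      using inj_onD[OF level.smult_tpow_inj_on[OF fg_projective]] ab(1) by blast
    then show "C = D"
      using abelian_subgroup.a_rcos_add_member[OF level.tpow_sub_abelian_subgroup ab(2) y(1)] a b
      by simp
  qed
qed

lemma mult_equiv_pos: "mult_equiv_pos R M d s p i"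
  unfolding mult_equiv_pos_def
proof (rule weak_equivalence_if_levelwise_bij[OF group_grade_level group_grade_level
      grade_mult_hom grade_mult_bij])
  fix n j C
  assume j: "j \<le> Suc n" and "C \<in> carrier (grade_level R M p (Suc n))"
  then obtain a where a: "a \<in> level.T (Suc n) p" "C = grade_class p (Suc n) a"
    by (auto simp: carrier_grade_level)
  have a_closed: "a \<in> carrier (M (Suc n))" using a(1) level.tpow_sub_closed by blast
  show "grade_face R M d p n j C \<in> carrier (grade_level R M p n)"
    using face_tpow_sub[OF j] a by (auto simp: carrier_grade_level grade_face_coset[OF j a_closed])
  show "grade_mult R M p i n (grade_face R M d p n j C) =
    grade_face R M d (p + i) n j (grade_mult R M p i (Suc n) C)"
    using a by (simp add: grade_face_coset[OF j] grade_mult_coset face_closed[OF j] level.smult_closed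
        level.tpow_closed a_closed face_smult_tpow[OF j])
next
  fix n j
  assume j: "j \<le> Suc n"
  show "grade_face R M d (p + i) n j \<one>\<^bsub>grade_level R M (p + i) (Suc n)\<^esub> = \<one>\<^bsub>grade_level R M (p + i) n\<^esub>"
    using grade_face_coset[OF j level.zero_closed] face_zero[OF j]
    by (simp add: one_grade_level level.zero_coset)
next
  fix n j C
  assume j: "j \<le> n" and "C \<in> carrier (grade_level R M p n)"
  then obtain a where a: "a \<in> level.T n p" "C = grade_class p n a"
    by (auto simp: carrier_grade_level)
  have a_closed: "a \<in> carrier (M n)" using a(1) level.tpow_sub_closed by blast
  show "grade_mult R M p i (Suc n) (grade_degen R M s p n j C) =
    grade_degen R M s (p + i) n j (grade_mult R M p i n C)"
    using a by (simp add: grade_degen_coset[OF j] grade_mult_coset degen_closed[OF j] level.smult_closed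
        level.tpow_closed a_closed degen_smult_tpow[OF j])
qed

end

theorem proposition5p9:
  fixes R :: "nat \<Rightarrow> 'r ring" and dR sR :: "nat \<Rightarrow> nat \<Rightarrow> 'r \<Rightarrow> 'r"
    and Mp :: "nat \<Rightarrow> (nat \<Rightarrow> 'r, 'm) module" and dMp sMp :: "nat \<Rightarrow> nat \<Rightarrow> 'm \<Rightarrow> 'm"
    and Mm :: "nat \<Rightarrow> (nat \<Rightarrow> 'r, 'n) module" and dMm sMm :: "nat \<Rightarrow> nat \<Rightarrow> 'n \<Rightarrow> 'n"
  assumes "simplicial_ring R dR sR"
    and "simplicial_poly_module R dR sR Mp dMp sMp"
    and "\<forall>n. fg_projective (UP (R n)) (Mp n)"
    and "simplicial_poly_module R dR sR Mm dMm sMm"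
    and "\<forall>n. fg_projective (UP (R n)) (Mm n)"
  shows "(\<forall>(p::nat) (i::nat). mult_equiv_pos R Mp dMp sMp p i) \<and>
         (\<forall>(p::int) (i::nat). p \<le> 0 \<longrightarrow> mult_equiv_neg R Mm dMm sMm p i)"
proof
  interpret plus: simplicial_fgp_poly_module R dR sR Mp dMp sMp
    using assms(1-3) by unfold_locales auto
  interpret minus: simplicial_fgp_poly_module R dR sR Mm dMm sMm
    using assms(1,4,5) by unfold_locales auto
  show "\<forall>p i. mult_equiv_pos R Mp dMp sMp p i"
    using plus.mult_equiv_pos by blast
  show "\<forall>(p::int) i. p \<le> 0 \<longrightarrow> mult_equiv_neg R Mm dMm sMm p i"
  proof (intro allI impI)
    fix p :: int and i :: nat
    assume "p \<le> 0"
    then have "nat (- (p - int i)) = nat (- p) + i" by arith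
    then show "mult_equiv_neg R Mm dMm sMm p i"
      using minus.mult_equiv_pos[of "nat (- p)" i]
      by (simp add: mult_equiv_neg_def grade_level_neg_def mult_equiv_pos_def)
  qed
qed

end
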